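(* In QHC: (a) for every problem $\alpha$ and proposition $q$, setting $p=?\alpha$: $(!p\to !q)\Leftrightarrow\, !(p\to q)$; (b) for all problems $\alpha$ and propositions $q$, setting $\beta=!q$: $(\nabla\alpha\to\beta)\Leftrightarrow(\alpha\to\beta)\Leftrightarrow\nabla(\alpha\to\beta)$; (c) for every problem $\alpha$ and proposition $q$, setting $p=?\alpha$: $(p\to\Box q)\Rightarrow(p\to q)$, and $p\to q\ \vdash\ p\to\Box q$.
   Context: QHC is a two-sorted first-order calculus. Its only terms are individual variables. Every formula is either a problem (denoted by Greek letters $\alpha,\beta,\gamma,\dots$) or a proposition (denoted by Latin letters $p,q,\dots$). Atomic formulas are proposition variables $p(t_1,\dots,t_n)$ (of proposition type), problem variables $\pi(t_1,\dots,t_n)$ (of problem type), and the constants $0$ (a proposition, classical falsity) and $\bot$ (a problem, intuitionistic absurdity). Propositions are closed under the classical connectives $\land,\lor,\to$ and quantifiers $\exists,\forall$; problems are closed under the intuitionistic connectives $\land,\lor,\to$ and quantifiers $\exists,\forall$ (the same symbols are used, distinguished by the type of the arguments). $\neg p$ abbreviates $p\to 0$, $\neg\alpha$ abbreviates $\alpha\to\bot$, and $\leftrightarrow$ is defined as usual. There are two type-conversion operators: if $p$ is a proposition then $!p$ is a problem, and if $\alpha$ is a problem then $?\alpha$ is a proposition. Deductive system of QHC: all axioms and rules of classical predicate logic applied to all propositions; all postulates and rules of intuitionistic predicate logic applied to all problems; the rules $p\,/\,!p$ and $\alpha\,/\,?\alpha$; and the schemas $?!p\to p$; $\alpha\to\,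 !?\alpha$; $!(p\to q)\to(!p\to !q)$; $?(\alpha\to\beta)\to(?\alpha\to ?\beta)$; $!0\to\bot$; $?(\alpha\land\beta)\leftrightarrow ?\alpha\land ?\beta$; $?(\alpha\lor\beta)\leftrightarrow ?\alpha\lor ?\beta$; $?\bot\to 0$; $?\exists x\,\alpha(x)\leftrightarrow\exists x\,?\alpha(x)$; $?\forall x\,\alpha(x)\to\forall x\,?\alpha(x)$ (usual variable side conditions implicit). $\vdash A$ means $A$ is derivable in QHC; $A\Rightarrow B$ means $\vdash A\to B$ and $A\Leftrightarrow B$ means $\vdash A\leftrightarrow B$ (with $A,B$ of the same type); $A\vdash B$ means $B$ is derivable in QHC from the premise $A$. Notation: $\Box p := ?!p$ (a proposition) and $\nabla\alpha := !?\alpha$ (a problem). QC and QH denote classical and intuitionistic predicate calculus. *)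

theory Defs
  imports Main
begin

text \<open>Individual variables and predicate/problem-variable names are natural numbers.
 qprop = propositions (classical sort), qprob = problems (intuitionistic sort).\<close>

type_synonym ivar = nat

datatype qprop =
    PVar nat "ivar list"
  | PZero
  | PAnd qprop qprop
  | POr qprop qprop
  | PImp qprop qprop
  | PEx ivar qprop
  | PAll ivar qprop
  | Quest qprob
and qprob =
    BVar nat "ivar list"
  | Bot
  | BAnd qprob qprob
  | BOr qprob qprob
  | BImp qprob qprob
  | BEx ivar qprob
  | BAll ivar qprob
  | Bang qprop

definition PIff :: "qprop \<Rightarrow> qprop \<Rightarrow> qprop" where
  "PIff a b = PAnd (PImp a b) (PImp b a)"

definition BIff :: "qprob \<Rightarrow> qprob \<Rightarrow> qprob" where
  "BIff a b = BAnd (BImp a b) (BImp b a)"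

definition Box :: "qprop \<Rightarrow> qprop" where
  "Box p = Quest (Bang p)"

definition Nabla :: "qprob \<Rightarrow> qprob" where
  "Nabla a = Bang (Quest a)"

primrec fvP :: "qprop \<Rightarrow> ivar set" and fvB :: "qprob \<Rightarrow> ivar set" where
  "fvP (PVar n ts) = set ts"
| "fvP PZero = {}"
| "fvP (PAnd a b) = fvP a \<union> fvP b"
| "fvP (POr a b) = fvP a \<union> fvP b"
| "fvP (PImp a b) = fvP a \<union> fvP b"
| "fvP (PEx z a) = fvP a - {z}"
| "fvP (PAll z a) = fvP a - {z}"
| "fvP (Quest a) = fvB a"
| "fvB (BVar n ts) = set ts"
| "fvB Bot = {}"
| "fvB (BAnd a b) = fvB a \<union> fvB b"
| "fvB (BOr a b) = fvB a \<union> fvB b"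
| "fvB (BImp a b) = fvB a \<union> fvB b"
| "fvB (BEx z a) = fvB a - {z}"
| "fvB (BAll z a) = fvB a - {z}"
| "fvB (Bang a) = fvP a"

primrec substP :: "ivar \<Rightarrow> ivar \<Rightarrow> qprop \<Rightarrow> qprop"
    and substB :: "ivar \<Rightarrow> ivar \<Rightarrow> qprob \<Rightarrow> qprob" where
  "substP x y (PVar n ts) = PVar n (map (\<lambda>t. if t = x then y else t) ts)"
| "substP x y PZero = PZero"
| "substP x y (PAnd a b) = PAnd (substP x y a) (substP x y b)"
| "substP x y (POr a b) = POr (substP x y a) (substP x y b)"
| "substP x y (PImp a b) = PImp (substP x y a) (substP x y b)"
| "substP x y (PEx z a) = (if z = x then PEx z a else PEx z (substP x y a))"
| "substP x y (PAll z a) = (if z = x then PAll z a else PAll z (substP x y a))"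
| "substP x y (Quest a) = Quest (substB x y a)"
| "substB x y (BVar n ts) = BVar n (map (\<lambda>t. if t = x then y else t) ts)"
| "substB x y Bot = Bot"
| "substB x y (BAnd a b) = BAnd (substB x y a) (substB x y b)"
| "substB x y (BOr a b) = BOr (substB x y a) (substB x y b)"
| "substB x y (BImp a b) = BImp (substB x y a) (substB x y b)"
| "substB x y (BEx z a) = (if z = x then BEx z a else BEx z (substB x y a))"
| "substB x y (BAll z a) = (if z = x then BAll z a else BAll z (substB x y a))"
| "substB x y (Bang a) = Bang (substP x y a)"

primrec freeforP :: "ivar \<Rightarrow> ivar \<Rightarrow> qprop \<Rightarrow> bool"
    and freeforB :: "ivar \<Rightarrow> ivar \<Rightarrow> qprob \<Rightarrow> bool" where
  "freeforP y x (PVar n ts) = True"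
| "freeforP y x PZero = True"
| "freeforP y x (PAnd a b) = (freeforP y x a \<and> freeforP y x b)"
| "freeforP y x (POr a b) = (freeforP y x a \<and> freeforP y x b)"
| "freeforP y x (PImp a b) = (freeforP y x a \<and> freeforP y x b)"
| "freeforP y x (PEx z a) = (x \<notin> fvP (PEx z a) \<or> (z \<noteq> y \<and> freeforP y x a))"
| "freeforP y x (PAll z a) = (x \<notin> fvP (PAll z a) \<or> (z \<noteq> y \<and> freeforP y x a))"
| "freeforP y x (Quest a) = freeforB y x a"
| "freeforB y x (BVar n ts) = True"
| "freeforB y x Bot = True"
| "freeforB y x (BAnd a b) = (freeforB y x a \<and> freeforB y x b)"
| "freeforB y x (BOr a b) = (freeforB y x a \<and> freeforB y x b)"
| "freeforB y x (BImp a b) = (freeforB y x a \<and> freeforB y x b)"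
| "freeforB y x (BEx z a) = (x \<notin> fvB (BEx z a) \<or> (z \<noteq> y \<and> freeforB y x a))"
| "freeforB y x (BAll z a) = (x \<notin> fvB (BAll z a) \<or> (z \<noteq> y \<and> freeforB y x a))"
| "freeforB y x (Bang a) = freeforP y x a"

text \<open>derP G D p: proposition p is derivable in QHC from the proposition premises G and
 problem premises D (premises are used as extra axioms; all rules apply).\<close>

inductive derP :: "qprop set \<Rightarrow> qprob set \<Rightarrow> qprop \<Rightarrow> bool"
      and derB :: "qprop set \<Rightarrow> qprob set \<Rightarrow> qprob \<Rightarrow> bool"
  for G :: "qprop set" and D :: "qprob set" where
  P_hyp: "p \<in> G \<Longrightarrow> derP G D p"
| B_hyp: "a \<in> D \<Longrightarrow> derB G D a"
| P_K: "derP G D (PImp a (PImp b a))"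
| P_S: "derP G D (PImp (PImp a (PImp b c)) (PImp (PImp a b) (PImp a c)))"
| P_conjE1: "derP G D (PImp (PAnd a b) a)"
| P_conjE2: "derP G D (PImp (PAnd a b) b)"
| P_conjI: "derP G D (PImp a (PImp b (PAnd a b)))"
| P_disjI1: "derP G D (PImp a (POr a b))"
| P_disjI2: "derP G D (PImp b (POr a b))"
| P_disjE: "derP G D (PImp (PImp a c) (PImp (PImp b c) (PImp (POr a b) c)))"
| P_efq: "derP G D (PImp PZero a)"
| P_dne: "derP G D (PImp (PImp (PImp a PZero) PZero) a)"
| P_allE: "freeforP y x a \<Longrightarrow> derP G D (PImp (PAll x a) (substP x y a))"
| P_exI: "freeforP y x a \<Longrightarrow> derP G D (PImp (substP x y a) (PEx x a))"
| P_mp: "derP G D (PImp a b) \<Longrightarrow> derP G D a \<Longrightarrow> derP G D b"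
| P_allI: "derP G D (PImp c a) \<Longrightarrow> x \<notin> fvP c \<Longrightarrow> derP G D (PImp c (PAll x a))"
| P_exE: "derP G D (PImp a c) \<Longrightarrow> x \<notin> fvP c \<Longrightarrow> derP G D (PImp (PEx x a) c)"
| B_K: "derB G D (BImp a (BImp b a))"
| B_S: "derB G D (BImp (BImp a (BImp b c)) (BImp (BImp a b) (BImp a c)))"
| B_conjE1: "derB G D (BImp (BAnd a b) a)"
| B_conjE2: "derB G D (BImp (BAnd a b) b)"
| B_conjI: "derB G D (BImp a (BImp b (BAnd a b)))"
| B_disjI1: "derB G D (BImp a (BOr a b))"
| B_disjI2: "derB G D (BImp b (BOr a b))"
| B_disjE: "derB G D (BImp (BImp a c) (BImp (BImp b c) (BImp (BOr a b) c)))"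
| B_efq: "derB G D (BImp Bot a)"
| B_allE: "freeforB y x a \<Longrightarrow> derB G D (BImp (BAll x a) (substB x y a))"
| B_exI: "freeforB y x a \<Longrightarrow> derB G D (BImp (substB x y a) (BEx x a))"
| B_mp: "derB G D (BImp a b) \<Longrightarrow> derB G D a \<Longrightarrow> derB G D b"
| B_allI: "derB G D (BImp c a) \<Longrightarrow> x \<notin> fvB c \<Longrightarrow> derB G D (BImp c (BAll x a))"
| B_exE: "derB G D (BImp a c) \<Longrightarrow> x \<notin> fvB c \<Longrightarrow> derB G D (BImp (BEx x a) c)"
| bang_rule: "derP G D p \<Longrightarrow> derB G D (Bang p)"
| quest_rule: "derB G D a \<Longrightarrow> derP G D (Quest a)"
| ax_qb: "derP G D (PImp (Quest (Bang p)) p)"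
| ax_bq: "derB G D (BImp a (Bang (Quest a)))"
| ax_bang_imp: "derB G D (BImp (Bang (PImp p q)) (BImp (Bang p) (Bang q)))"
| ax_quest_imp: "derP G D (PImp (Quest (BImp a b)) (PImp (Quest a) (Quest b)))"
| ax_bang_zero: "derB G D (BImp (Bang PZero) Bot)"
| ax_quest_and: "derP G D (PIff (Quest (BAnd a b)) (PAnd (Quest a) (Quest b)))"
| ax_quest_or: "derP G D (PIff (Quest (BOr a b)) (POr (Quest a) (Quest b)))"
| ax_quest_bot: "derP G D (PImp (Quest Bot) PZero)"
| ax_quest_ex: "derP G D (PIff (Quest (BEx x a)) (PEx x (Quest a)))"
| ax_quest_all: "derP G D (PImp (Quest (BAll x a)) (PAll x (Quest a)))"

abbreviation provP :: "qprop \<Rightarrow> bool" where "provP p \<equiv> derP {} {} p"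
abbreviation provB :: "qprob \<Rightarrow> bool" where "provB a \<equiv> derB {} {} a"

end

theory Submission
  imports Defs
begin

text \<open>For \<open>\<beta> = !q\<close> the four problems \<open>\<alpha> \<rightarrow> \<beta>\<close>, \<open>\<nabla>(\<alpha> \<rightarrow> \<beta>)\<close>, \<open>!(?\<alpha> \<rightarrow> q)\<close>
  and \<open>\<nabla>\<alpha> \<rightarrow> \<beta>\<close> imply each other in a cycle: the first step is \<open>\<alpha> \<rightarrow> \<nabla>\<alpha>\<close>,
  the second pushes \<open>?\<close> through the implication and cancels \<open>?!q \<rightarrow> q\<close>, the
  third distributes \<open>!\<close> over the implication, and the last precomposes with
  \<open>\<alpha> \<rightarrow> \<nabla>\<alpha>\<close>. Parts (a) and (b) are read off this cycle. For (c),
  \<open>?\<alpha> \<rightarrow> \<box>?\<alpha>\<close> together with monotonicity of \<open>\<box>\<close> turns \<open>?\<alpha> \<rightarrow> q\<close> into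
  \<open>?\<alpha> \<rightarrow> \<box>q\<close>, and \<open>\<box>q \<rightarrow> q\<close> gives the converse.\<close>

lemma derP_imp_trans:
  "derP G D (PImp a b) \<Longrightarrow> derP G D (PImp b c) \<Longrightarrow> derP G D (PImp a c)"
  by (meson P_K P_S P_mp)

lemma derB_imp_trans:
  "derB G D (BImp a b) \<Longrightarrow> derB G D (BImp b c) \<Longrightarrow> derB G D (BImp a c)"
  by (meson B_K B_S B_mp)

lemma derP_imp_postcomp:
  "derP G D (PImp b c) \<Longrightarrow> derP G D (PImp (PImp a b) (PImp a c))"
  by (meson P_K P_S P_mp)

lemma derB_imp_precomp:
  assumes "derB G D (BImp a' a)"
  shows "derB G D (BImp (BImp a b) (BImp a' b))"
proof -
  have "derB G D (BImp (BImp a b) (BImp (BImp a' a) (BImp a' b)))"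
    by (meson B_K B_S B_mp)
  then show ?thesis
    using assms by (meson B_K B_S B_mp)
qed

lemma derB_BIffI:
  "derB G D (BImp a b) \<Longrightarrow> derB G D (BImp b a) \<Longrightarrow> derB G D (BIff a b)"
  unfolding BIff_def by (meson B_conjI B_mp)

lemma derP_quest_imp_bang: "derP G D (PImp (Quest (BImp a (Bang q))) (PImp (Quest a) q))"
  by (meson ax_quest_imp ax_qb derP_imp_postcomp derP_imp_trans)

lemma derB_nabla_imp_bang: "derB G D (BImp (Nabla (BImp a (Bang q))) (Bang (PImp (Quest a) q)))"
  unfolding Nabla_def by (meson derP_quest_imp_bang bang_rule ax_bang_imp B_mp)

lemma derB_bang_quest_imp_imp_nabla_imp:
  "derB G D (BImp (Bang (PImp (Quest a) q)) (BImp (Nabla a) (Bang q)))"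
  unfolding Nabla_def by (rule ax_bang_imp)

lemma derB_nabla_imp_imp_imp: "derB G D (BImp (BImp (Nabla a) b) (BImp a b))"
  unfolding Nabla_def by (rule derB_imp_precomp[OF ax_bq])

lemma derP_quest_imp_box_quest: "derP G D (PImp (Quest a) (Box (Quest a)))"
  unfolding Box_def by (meson quest_rule ax_bq ax_quest_imp P_mp)

lemma derP_box_mono: "derP G D (PImp p q) \<Longrightarrow> derP G D (PImp (Box p) (Box q))"
  unfolding Box_def by (meson bang_rule ax_bang_imp B_mp quest_rule ax_quest_imp P_mp)

lemma derP_quest_imp_box:
  "derP G D (PImp (Quest a) q) \<Longrightarrow> derP G D (PImp (Quest a) (Box q))"
  by (meson derP_quest_imp_box_quest derP_box_mono derP_imp_trans)

lemma derP_imp_box_imp_imp: "derP G D (PImp (PImp p (Box q)) (PImp p q))"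
  unfolding Box_def by (rule derP_imp_postcomp[OF ax_qb])

theorem proposition2p13:
  shows "(\<forall>a q. let p = Quest a in provB (BIff (BImp (Bang p) (Bang q)) (Bang (PImp p q))))
    \<and> (\<forall>a q. let b = Bang q in
           provB (BIff (BImp (Nabla a) b) (BImp a b)) \<and>
           provB (BIff (BImp a b) (Nabla (BImp a b))))
    \<and> (\<forall>a q. let p = Quest a in
           provP (PImp (PImp p (Box q)) (PImp p q)) \<and>
           derP {PImp p q} {} (PImp p (Box q)))"
proof (intro conjI allI)
  fix a q
  let ?b = "Bang q"
  have imp_to_nabla: "provB (BImp (BImp a ?b) (Nabla (BImp a ?b)))"
    unfolding Nabla_def by (rule ax_bq)
  have nabla_to_bang: "provB (BImp (Nabla (BImp a ?b)) (Bang (PImp (Quest a) q)))"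
    by (rule derB_nabla_imp_bang)
  have bang_to_nabla_imp: "provB (BImp (Bang (PImp (Quest a) q)) (BImp (Nabla a) ?b))"
    by (rule derB_bang_quest_imp_imp_nabla_imp)
  have nabla_imp_to_imp: "provB (BImp (BImp (Nabla a) ?b) (BImp a ?b))"
    by (rule derB_nabla_imp_imp_imp)
  show "let p = Quest a in provB (BIff (BImp (Bang p) (Bang q)) (Bang (PImp p q)))"
    unfolding Let_def
    using derB_imp_trans[OF nabla_imp_to_imp derB_imp_trans[OF imp_to_nabla nabla_to_bang]]
      ax_bang_imp
    by (simp add: Nabla_def derB_BIffI)
  show "let b = Bang q in
      provB (BIff (BImp (Nabla a) b) (BImp a b)) \<and>
      provB (BIff (BImp a b) (Nabla (BImp a b)))"
    unfolding Let_def
    by (meson derB_BIffI derB_imp_trans imp_to_nabla nabla_to_bang bang_to_nabla_imp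
        nabla_imp_to_imp)
next
  fix a q
  show "let p = Quest a in
      provP (PImp (PImp p (Box q)) (PImp p q)) \<and>
      derP {PImp p q} {} (PImp p (Box q))"
    unfolding Let_def
    by (simp add: derP_imp_box_imp_imp derP_quest_imp_box P_hyp)
qed

end
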